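(* Let $u,w\in\mathbb{D}$ and let $B(z)=\left(\frac{z-w}{1-\overline{w}z}\right)\left(\frac{z-u}{1-\overline{u}z}\right)$. Then the unique critical point $c$ of $B$ in $\mathbb{D}$ lies at the midpoint of the hyperbolic geodesic between $u$ and $w$. Further, there are sets $D_1,D_2\subset\mathbb{D}$ such that $D_1\cup D_2=\mathbb{D}$, $D_1\cap D_2=\{c\}$ and $B$ is a one-to-one map from $D_j$ onto $\mathbb{D}$ for $j=1,2$.
   Context: $\mathbb{D}$ denotes the open unit disk, equipped with its hyperbolic metric. *)

theory Defs
  imports "HOL-Analysis.Analysis"
begin

definition unit_disk :: "complex set" where
  "unit_disk = ball 0 1"

text \<open>Hyperbolic distance on the unit disk (curvature -1 normalisation):
  d(z,w) = 2 artanh(|z - w| / |1 - conj w * z|).\<close>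
definition hyp_dist :: "complex \<Rightarrow> complex \<Rightarrow> real" where
  "hyp_dist z w = 2 * artanh (cmod (z - w) / cmod (1 - cnj w * z))"

text \<open>m is the midpoint of the hyperbolic geodesic segment from u to w:
  m lies on the geodesic (equality in the triangle inequality) and is
  equidistant from both endpoints.\<close>
definition hyp_geodesic_midpoint :: "complex \<Rightarrow> complex \<Rightarrow> complex \<Rightarrow> bool" where
  "hyp_geodesic_midpoint u w m \<longleftrightarrow>
     m \<in> unit_disk \<and> hyp_dist u m + hyp_dist m w = hyp_dist u w \<and> hyp_dist u m = hyp_dist m w"

end

theory Submission
  imports Defs
begin

text \<open>The Blaschke factors M_p(z) = (z - p) / (1 - conj p * z) are hyperbolic isometries of the
  disk, and B = M_w * M_u. The numerator of B' is a self-inversive quadratic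
  conj g * z^2 + 2 k z + g with |g| < k, whose two roots are reflections of each other in the unit
  circle; so exactly one critical point c lies in the disk. Moving c to 0 by M_c makes the zeros
  a = M_c(u) and M_c(w) antipodal, and then B(M_(-c)(z)) = l * M_(a^2)(z^2) with |l| = 1.
  Hence c = M_(-c)(0) is the image of the hyperbolic midpoint 0 of a and -a, and D1, D2 are the
  images under M_(-c) of two complementary half-disks on which squaring is bijective.\<close>

lemma mem_unit_disk [simp]: "z \<in> unit_disk \<longleftrightarrow> cmod z < 1"
  by (simp add: unit_disk_def)

lemma norm_mult_less_1:
  fixes a b :: complex
  assumes "cmod a < 1" "cmod b < 1"
  shows "cmod (a * b) < 1"
  using mult_strict_mono'[of "cmod a" 1 "cmod b" 1] assms by (simp add: norm_mult)

definition blaschke_factor :: "complex \<Rightarrow> complex \<Rightarrow> complex" where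
  "blaschke_factor p z = (z - p) / (1 - cnj p * z)"

lemma blaschke_factor_denom_nonzero:
  assumes "cmod p < 1" "cmod z < 1"
  shows "1 - cnj p * z \<noteq> 0"
  using norm_mult_less_1[of "cnj p" z] assms by auto

lemma norm_blaschke_factor_less_1:
  assumes "cmod p < 1" "cmod z < 1"
  shows "cmod (blaschke_factor p z) < 1"
proof -
  have "of_real ((cmod (1 - cnj p * z))^2 - (cmod (z - p))^2)
      = (complex_of_real ((1 - (cmod z)^2) * (1 - (cmod p)^2)))"
    by (simp only: of_real_diff of_real_mult of_real_1 complex_norm_square complex_cnj_diff
        complex_cnj_mult complex_cnj_cnj complex_cnj_one) algebra
  then have "(cmod (1 - cnj p * z))^2 - (cmod (z - p))^2 = (1 - (cmod z)^2) * (1 - (cmod p)^2)"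
    using of_real_eq_iff by blast
  moreover have "(1 - (cmod z)^2) * (1 - (cmod p)^2) > 0"
    using assms by (simp add: abs_square_less_1)
  ultimately have "(cmod (z - p))^2 < (cmod (1 - cnj p * z))^2"
    by linarith
  then have "cmod (z - p) < cmod (1 - cnj p * z)"
    using power_less_imp_less_base by fastforce
  then show ?thesis
    using blaschke_factor_denom_nonzero[OF assms] by (simp add: blaschke_factor_def norm_divide)
qed

lemma blaschke_factor_inverse:
  assumes "cmod p < 1" "cmod z < 1"
  shows "blaschke_factor (-p) (blaschke_factor p z) = z"
  using blaschke_factor_denom_nonzero[OF assms] blaschke_factor_denom_nonzero[OF assms(1,1)]
  unfolding blaschke_factor_def by (simp add: divide_simps) algebra

lemma bij_betw_blaschke_factor:
  assumes "cmod p < 1"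
  shows "bij_betw (blaschke_factor p) unit_disk unit_disk"
proof (rule bij_betw_byWitness[where f' = "blaschke_factor (-p)"])
  show "\<forall>z\<in>unit_disk. blaschke_factor (-p) (blaschke_factor p z) = z"
    using blaschke_factor_inverse assms by simp
  show "\<forall>z\<in>unit_disk. blaschke_factor p (blaschke_factor (-p) z) = z"
    using blaschke_factor_inverse[of "-p"] assms by simp
  show "blaschke_factor p ` unit_disk \<subseteq> unit_disk"
    "blaschke_factor (-p) ` unit_disk \<subseteq> unit_disk"
    using norm_blaschke_factor_less_1 assms by auto
qed

lemma blaschke_factor_diff:
  assumes "1 - cnj p * x \<noteq> 0" "1 - cnj p * y \<noteq> 0"
  shows "blaschke_factor p x - blaschke_factor p y
       = (1 - cnj p * p) * (x - y) / ((1 - cnj p * x) * (1 - cnj p * y))"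
  using assms unfolding blaschke_factor_def by (simp add: field_simps)

lemma one_minus_cnj_blaschke_factor_mult:
  assumes "1 - cnj p * x \<noteq> 0" "1 - p * cnj y \<noteq> 0"
  shows "1 - cnj (blaschke_factor p y) * blaschke_factor p x
       = (1 - cnj p * p) * (1 - cnj y * x) / ((1 - p * cnj y) * (1 - cnj p * x))"
  using assms unfolding blaschke_factor_def by (simp add: divide_simps) algebra

lemma norm_blaschke_factor_multiplier:
  assumes "cmod p < 1" "cmod y < 1"
  shows "cmod ((1 - p * cnj y) / (1 - cnj p * y)) = 1"
proof -
  have "cmod (1 - p * cnj y) = cmod (1 - cnj p * y)"
    by (metis complex_mod_cnj complex_cnj_diff complex_cnj_mult complex_cnj_cnj complex_cnj_one)
  then show ?thesis
    using blaschke_factor_denom_nonzero[OF assms] by (simp add: norm_divide)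
qed

text \<open>The multiplier has modulus 1, so this is the invariance of the pseudo-hyperbolic distance.\<close>
lemma blaschke_factor_of_images:
  assumes "cmod p < 1" "cmod x < 1" "cmod y < 1"
  shows "blaschke_factor (blaschke_factor p y) (blaschke_factor p x)
       = (1 - p * cnj y) / (1 - cnj p * y) * blaschke_factor y x"
proof -
  have nonzero: "1 - cnj p * x \<noteq> 0" "1 - cnj p * y \<noteq> 0" "1 - p * cnj y \<noteq> 0"
    "1 - cnj y * x \<noteq> 0" "1 - cnj p * p \<noteq> 0"
    using blaschke_factor_denom_nonzero assms
    by (auto simp: mult.commute[of p] blaschke_factor_denom_nonzero[of y p, simplified])
  have "blaschke_factor (blaschke_factor p y) (blaschke_factor p x)
      = (blaschke_factor p x - blaschke_factor p y) / (1 - cnj (blaschke_factor p y) * blaschke_factor p x)"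
    by (simp add: blaschke_factor_def)
  also have "\<dots> = (1 - p * cnj y) / (1 - cnj p * y) * blaschke_factor y x"
    unfolding blaschke_factor_diff[OF nonzero(1,2)] one_minus_cnj_blaschke_factor_mult[OF nonzero(1,3)]
    using nonzero by (simp add: blaschke_factor_def divide_simps)
  finally show ?thesis .
qed

lemma hyp_dist_eq_blaschke_factor: "hyp_dist z w = 2 * artanh (cmod (blaschke_factor w z))"
  by (simp add: hyp_dist_def blaschke_factor_def norm_divide)

lemma hyp_dist_blaschke_factor:
  assumes "cmod p < 1" "cmod x < 1" "cmod y < 1"
  shows "hyp_dist (blaschke_factor p x) (blaschke_factor p y) = hyp_dist x y"
proof -
  have "cmod ((1 - p * cnj y) / (1 - cnj p * y)) = 1"
    using norm_blaschke_factor_multiplier assms(1,3) .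
  then show ?thesis
    unfolding hyp_dist_eq_blaschke_factor blaschke_factor_of_images[OF assms] norm_mult
    by simp
qed

lemma hyp_geodesic_midpoint_blaschke_factor:
  assumes "cmod p < 1" "cmod x < 1" "cmod y < 1" "hyp_geodesic_midpoint x y m"
  shows "hyp_geodesic_midpoint (blaschke_factor p x) (blaschke_factor p y) (blaschke_factor p m)"
proof -
  have "cmod m < 1"
    using assms(4) by (simp add: hyp_geodesic_midpoint_def)
  then show ?thesis
    using assms norm_blaschke_factor_less_1
    by (simp add: hyp_geodesic_midpoint_def hyp_dist_blaschke_factor)
qed

lemma artanh_double:
  fixes r :: real
  assumes "0 \<le> r" "r < 1"
  shows "artanh (2 * r / (1 + r^2)) = 2 * artanh r"
proof -
  have pos: "1 + r^2 > 0"
    by (simp add: add_pos_nonneg)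
  have "1 - 2 * r / (1 + r^2) = (1 - r)^2 / (1 + r^2)" "1 + 2 * r / (1 + r^2) = (1 + r)^2 / (1 + r^2)"
    using pos by (simp_all add: field_simps power2_eq_square)
  then have "(1 + 2 * r / (1 + r^2)) / (1 - 2 * r / (1 + r^2)) = ((1 + r) / (1 - r))^2"
    using pos assms by (simp add: power_divide)
  then show ?thesis
    unfolding artanh_def by (simp add: ln_realpow)
qed

lemma hyp_geodesic_midpoint_antipodal:
  assumes "cmod a < 1"
  shows "hyp_geodesic_midpoint a (-a) 0"
proof -
  have "1 - cnj (-a) * a = of_real (1 + (cmod a)^2)"
    unfolding of_real_add of_real_1 complex_norm_square by simp
  then have "cmod (1 - cnj (-a) * a) = 1 + (cmod a)^2"
    by (simp only: norm_of_real) simp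
  moreover have "cmod (a - -a) = 2 * cmod a"
    by (simp add: norm_mult[symmetric])
  ultimately have "hyp_dist a (-a) = 2 * artanh (2 * cmod a / (1 + (cmod a)^2))"
    by (simp add: hyp_dist_def)
  then show ?thesis
    using assms by (simp add: hyp_geodesic_midpoint_def hyp_dist_def artanh_double)
qed

definition blaschke_crit_poly :: "complex \<Rightarrow> complex \<Rightarrow> complex \<Rightarrow> complex" where
  "blaschke_crit_poly u w z =
     (1 - w * cnj w) * (z - u) * (1 - cnj u * z) + (1 - u * cnj u) * (z - w) * (1 - cnj w * z)"

lemma has_field_derivative_blaschke_factor:
  assumes "1 - cnj p * z \<noteq> 0"
  shows "(blaschke_factor p has_field_derivative (1 - p * cnj p) / (1 - cnj p * z)^2) (at z)"
  unfolding blaschke_factor_def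
  by (rule derivative_eq_intros refl | use assms in \<open>simp add: divide_simps; algebra\<close>)+

lemma deriv_blaschke_product:
  assumes "1 - cnj w * z \<noteq> 0" "1 - cnj u * z \<noteq> 0"
  shows "deriv (\<lambda>z. blaschke_factor w z * blaschke_factor u z) z
       = blaschke_crit_poly u w z / ((1 - cnj w * z)^2 * (1 - cnj u * z)^2)"
proof (rule DERIV_imp_deriv, rule DERIV_cong)
  show "((\<lambda>z. blaschke_factor w z * blaschke_factor u z) has_field_derivative
          (1 - w * cnj w) / (1 - cnj w * z)^2 * blaschke_factor u z
        + (1 - u * cnj u) / (1 - cnj u * z)^2 * blaschke_factor w z) (at z)"
    by (intro DERIV_mult has_field_derivative_blaschke_factor assms)
  show "(1 - w * cnj w) / (1 - cnj w * z)^2 * blaschke_factor u z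
        + (1 - u * cnj u) / (1 - cnj u * z)^2 * blaschke_factor w z
      = blaschke_crit_poly u w z / ((1 - cnj w * z)^2 * (1 - cnj u * z)^2)"
    using assms by (simp add: blaschke_factor_def blaschke_crit_poly_def divide_simps) algebra
qed

lemma blaschke_crit_poly_self_inversive:
  "blaschke_crit_poly u w z = cnj g * z^2 + 2 * of_real (1 - (cmod u * cmod w)^2) * z + g"
  if "g = - (u * (1 - w * cnj w) + w * (1 - u * cnj u))"
proof -
  have norms: "of_real ((cmod u * cmod w)^2) = (u * cnj u) * (w * cnj w)"
    by (simp only: power_mult_distrib of_real_mult complex_norm_square)
  show ?thesis
    unfolding blaschke_crit_poly_def that of_real_diff of_real_1 norms
    by (simp only: complex_cnj_minus complex_cnj_add complex_cnj_mult complex_cnj_diff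
        complex_cnj_one complex_cnj_cnj) algebra
qed

lemma self_inversive_quadratic_ex1_root_in_disk:
  fixes g :: complex and k :: real
  assumes "cmod g < k"
  shows "\<exists>!z. cmod z < 1 \<and> cnj g * z^2 + 2 * of_real k * z + g = 0"
proof (rule ex_ex1I)
  define s where "s = k + sqrt (k^2 - (cmod g)^2)"
  have discr: "(cmod g)^2 \<le> k^2"
    using assms by (intro power_mono) auto
  then have s_root: "s^2 - 2 * k * s + (cmod g)^2 = 0"
    by (simp add: s_def power2_eq_square algebra_simps)
  have g_less_s: "cmod g < s"
    using assms real_sqrt_ge_zero[of "k^2 - (cmod g)^2"] discr unfolding s_def by linarith
  then have s_pos: "s > 0"
    using norm_ge_zero[of g] by linarith
  have "cnj g * (- g / of_real s)^2 + 2 * of_real k * (- g / of_real s) + g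
      = g * (of_real s ^ 2 - 2 * of_real k * of_real s + g * cnj g) / of_real s ^ 2"
    using s_pos by (simp add: divide_simps power2_eq_square algebra_simps)
  also have "of_real s ^ 2 - 2 * of_real k * of_real s + g * cnj g
      = complex_of_real (s^2 - 2 * k * s + (cmod g)^2)"
    using complex_norm_square[of g] by simp
  finally have "cnj g * (- g / of_real s)^2 + 2 * of_real k * (- g / of_real s) + g = 0"
    using s_root by simp
  moreover have "cmod (- g / of_real s) < 1"
    using g_less_s s_pos by (simp add: norm_divide)
  ultimately show "\<exists>z. cmod z < 1 \<and> cnj g * z^2 + 2 * of_real k * z + g = 0"
    by blast
next
  fix z1 z2
  assume z1: "cmod z1 < 1 \<and> cnj g * z1^2 + 2 * of_real k * z1 + g = 0"
    and z2: "cmod z2 < 1 \<and> cnj g * z2^2 + 2 * of_real k * z2 + g = 0"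
  show "z1 = z2"
  proof (rule ccontr)
    assume "z1 \<noteq> z2"
    have "(z1 - z2) * (cnj g * (z1 + z2) + 2 * of_real k) = 0"
      using z1 z2 by algebra
    then have sum: "cnj g * (z1 + z2) + 2 * of_real k = 0"
      using \<open>z1 \<noteq> z2\<close> by simp
    then have "g = cnj g * (z1 * z2)"
      using z1 by algebra
    moreover have "g \<noteq> 0"
      using sum assms by auto
    ultimately have "cmod (z1 * z2) = 1"
      by (metis complex_mod_cnj mult_cancel_left1 norm_eq_zero norm_mult)
    then show False
      using norm_mult_less_1[of z1 z2] z1 z2 by simp
  qed
qed

lemma blaschke_crit_poly_coeff_bound:
  assumes "cmod u < 1" "cmod w < 1"
  shows "cmod (- (u * (1 - w * cnj w) + w * (1 - u * cnj u))) < 1 - (cmod u * cmod w)^2"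
proof -
  have real_coeffs: "1 - w * cnj w = of_real (1 - (cmod w)^2)" "1 - u * cnj u = of_real (1 - (cmod u)^2)"
    by (simp_all only: complex_norm_square of_real_diff of_real_1)
  have nonneg: "1 - (cmod w)^2 \<ge> 0" "1 - (cmod u)^2 \<ge> 0"
    using assms by (simp_all add: abs_square_le_1 less_imp_le)
  have "cmod (- (u * (1 - w * cnj w) + w * (1 - u * cnj u)))
      \<le> cmod (u * (1 - w * cnj w)) + cmod (w * (1 - u * cnj u))"
    by (simp only: norm_minus_cancel norm_triangle_ineq)
  also have "\<dots> = cmod u * (1 - (cmod w)^2) + cmod w * (1 - (cmod u)^2)"
    unfolding real_coeffs
    by (simp only: norm_mult norm_of_real abs_of_nonneg[OF nonneg(1)] abs_of_nonneg[OF nonneg(2)])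
  also have "\<dots> < 1 - (cmod u * cmod w)^2"
  proof -
    have "(1 - cmod u) * (1 - cmod w) * (1 - cmod u * cmod w) > 0"
      using assms norm_mult_less_1[of u w] by (simp add: norm_mult)
    then show ?thesis
      by (simp add: algebra_simps power2_eq_square)
  qed
  finally show ?thesis .
qed

lemma blaschke_crit_poly_ex1_root_in_disk:
  assumes "cmod u < 1" "cmod w < 1"
  shows "\<exists>!c. cmod c < 1 \<and> blaschke_crit_poly u w c = 0"
  using self_inversive_quadratic_ex1_root_in_disk[OF blaschke_crit_poly_coeff_bound[OF assms]]
  by (simp add: blaschke_crit_poly_self_inversive)

lemma blaschke_crit_poly_blaschke_factor:
  assumes "1 - cnj c * u \<noteq> 0" "1 - c * cnj u \<noteq> 0" "1 - cnj c * w \<noteq> 0" "1 - c * cnj w \<noteq> 0"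
  shows "blaschke_crit_poly (blaschke_factor c u) (blaschke_factor c w) 0
       = (1 - c * cnj c) * blaschke_crit_poly u w c
         / ((1 - cnj c * u) * (1 - c * cnj u) * (1 - cnj c * w) * (1 - c * cnj w))"
  using assms unfolding blaschke_factor_def blaschke_crit_poly_def by (simp add: divide_simps) algebra

lemma antipodal_if_blaschke_crit_poly_0:
  assumes "cmod a < 1" "cmod b < 1" "blaschke_crit_poly a b 0 = 0"
  shows "b = -a"
proof -
  define \<alpha> \<beta> where "\<alpha> = 1 - (cmod a)^2" and "\<beta> = 1 - (cmod b)^2"
  have pos: "\<alpha> > 0" "\<beta> > 0"
    using assms by (simp_all add: \<alpha>_def \<beta>_def abs_square_less_1)
  have "b * of_real \<alpha> + a * of_real \<beta> = 0"
    using assms(3) unfolding \<alpha>_def \<beta>_def of_real_diff of_real_1 complex_norm_square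
    by (simp add: blaschke_crit_poly_def algebra_simps)
  then have weighted: "b * of_real \<alpha> = - (a * of_real \<beta>)"
    by (simp add: eq_neg_iff_add_eq_0)
  then have "cmod b * \<alpha> = cmod a * \<beta>"
    using pos by (metis norm_minus_cancel norm_mult norm_of_real abs_of_pos)
  then have "(cmod b - cmod a) * (1 + cmod a * cmod b) = 0"
    by (simp add: \<alpha>_def \<beta>_def algebra_simps power2_eq_square)
  moreover have "1 + cmod a * cmod b > 0"
    by (simp add: add_pos_nonneg)
  ultimately have "\<beta> = \<alpha>"
    by (simp add: \<alpha>_def \<beta>_def)
  then have "(b + a) * of_real \<alpha> = 0"
    using weighted by (simp add: algebra_simps)
  then show ?thesis
    using pos by (simp add: eq_neg_iff_add_eq_0)
qed

lemma blaschke_factor_zeros_antipodal: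
  assumes "cmod u < 1" "cmod w < 1" "cmod c < 1" "blaschke_crit_poly u w c = 0"
  shows "blaschke_factor c w = - blaschke_factor c u"
proof (rule antipodal_if_blaschke_crit_poly_0)
  have "1 - c * cnj u \<noteq> 0" "1 - c * cnj w \<noteq> 0"
    using blaschke_factor_denom_nonzero[of u c] blaschke_factor_denom_nonzero[of w c] assms
    by (simp_all add: mult.commute)
  then show "blaschke_crit_poly (blaschke_factor c u) (blaschke_factor c w) 0 = 0"
    using assms blaschke_factor_denom_nonzero
    by (simp add: blaschke_crit_poly_blaschke_factor)
  show "cmod (blaschke_factor c u) < 1" "cmod (blaschke_factor c w) < 1"
    using assms norm_blaschke_factor_less_1 by auto
qed

lemma blaschke_factor_mult_antipodal:
  "blaschke_factor (-a) z * blaschke_factor a z = blaschke_factor (a^2) (z^2)"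
proof -
  have "(z - -a) * (z - a) = z^2 - a^2" "(1 - cnj (-a) * z) * (1 - cnj a * z) = 1 - cnj (a^2) * z^2"
    by (simp_all add: power2_eq_square algebra_simps)
  then show ?thesis
    unfolding blaschke_factor_def times_divide_times_eq by simp
qed

lemma blaschke_product_antipodal_normal_form:
  assumes "cmod u < 1" "cmod w < 1" "cmod c < 1"
    and "blaschke_factor c w = - blaschke_factor c u"
  obtains l where "cmod l = 1"
    and "\<And>z. cmod z < 1 \<Longrightarrow> blaschke_factor w (blaschke_factor (-c) z) * blaschke_factor u (blaschke_factor (-c) z)
                          = l * blaschke_factor ((blaschke_factor c u)^2) (z^2)"
proof -
  define a where "a = blaschke_factor c u"
  define m where "m y = (1 - (-c) * cnj y) / (1 - cnj (-c) * y)" for y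
  have a: "cmod a < 1" "cmod (-a) < 1"
    using norm_blaschke_factor_less_1 assms by (simp_all add: a_def)
  have c: "cmod (-c) < 1"
    using assms by simp
  have zeros: "blaschke_factor (-c) a = u" "blaschke_factor (-c) (-a) = w"
    using blaschke_factor_inverse assms by (simp_all add: a_def flip: assms(4))
  have "blaschke_factor w (blaschke_factor (-c) z) * blaschke_factor u (blaschke_factor (-c) z)
      = (m (-a) * m a) * blaschke_factor (a^2) (z^2)" if "cmod z < 1" for z
    using blaschke_factor_of_images[OF c that a(1)] blaschke_factor_of_images[OF c that a(2)]
    unfolding zeros m_def blaschke_factor_mult_antipodal[symmetric] by (simp add: mult_ac)
  moreover have "cmod (m (-a) * m a) = 1"
    using norm_blaschke_factor_multiplier[OF c a(1)] norm_blaschke_factor_multiplier[OF c a(2)]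
    unfolding m_def norm_mult by simp
  ultimately show ?thesis
    using that unfolding a_def by blast
qed

text \<open>The range of the principal square root on the disk.\<close>
definition half_disk :: "complex set" where
  "half_disk = {z \<in> unit_disk. 0 < Re z \<or> Re z = 0 \<and> 0 \<le> Im z}"

lemma bij_betw_power2_half_disk: "bij_betw (\<lambda>z. z^2) half_disk unit_disk"
proof (rule bij_betw_byWitness[where f' = csqrt])
  show "\<forall>z\<in>half_disk. csqrt (z^2) = z"
    by (auto simp: half_disk_def intro: csqrt_square)
  show "\<forall>z\<in>unit_disk. (csqrt z)^2 = z"
    by simp
  show "(\<lambda>z. z^2) ` half_disk \<subseteq> unit_disk"
    by (auto simp: half_disk_def norm_power power_less_one_iff)
  show "csqrt ` unit_disk \<subseteq> half_disk"
  proof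
    fix x assume "x \<in> csqrt ` unit_disk"
    then obtain t where "cmod t < 1" "x = csqrt t"
      by auto
    then show "x \<in> half_disk"
      using csqrt_principal[of t] by (simp add: half_disk_def)
  qed
qed

lemma bij_betw_power2_uminus_half_disk: "bij_betw (\<lambda>z. z^2) (uminus ` half_disk) unit_disk"
proof -
  have "bij_betw uminus half_disk (uminus ` half_disk)"
    by (simp add: bij_betw_imageI)
  moreover have "bij_betw ((\<lambda>z. z^2) \<circ> uminus) half_disk unit_disk"
    using bij_betw_power2_half_disk by (simp add: comp_def)
  ultimately show ?thesis
    using bij_betw_comp_iff by blast
qed

lemma half_disk_Un_uminus: "half_disk \<union> uminus ` half_disk = unit_disk"
proof (intro equalityI subsetI)
  fix z assume z: "z \<in> unit_disk"
  show "z \<in> half_disk \<union> uminus ` half_disk"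
  proof (cases "z \<in> half_disk")
    case False
    then have "- z \<in> half_disk"
      using z by (auto simp: half_disk_def)
    then show ?thesis
      by (metis UnI2 image_eqI minus_minus)
  qed simp
qed (auto simp: half_disk_def)

lemma half_disk_Int_uminus: "half_disk \<inter> uminus ` half_disk = {0}"
proof (intro equalityI subsetI)
  fix z assume "z \<in> half_disk \<inter> uminus ` half_disk"
  then have "z \<in> half_disk" "- z \<in> half_disk"
    by (auto simp: image_iff)
  then show "z \<in> {0}"
    by (auto simp: half_disk_def complex_eq_iff)
next
  have "0 \<in> half_disk"
    by (simp add: half_disk_def)
  then show "z \<in> half_disk \<inter> uminus ` half_disk" if "z \<in> {0}" for z
    using that by (auto intro: image_eqI[of 0 uminus 0])
qed

lemma bij_betw_mult_unimodular:
  assumes "cmod l = 1"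
  shows "bij_betw ((*) l) unit_disk unit_disk"
proof (rule bij_betw_byWitness[where f' = "\<lambda>z. z / l"])
  show "\<forall>z\<in>unit_disk. l * z / l = z" "\<forall>z\<in>unit_disk. l * (z / l) = z"
    using assms by auto
  show "(*) l ` unit_disk \<subseteq> unit_disk" "(\<lambda>z. z / l) ` unit_disk \<subseteq> unit_disk"
    using assms by (auto simp: norm_mult norm_divide)
qed

lemma disk_split_if_square_factorisation:
  assumes \<psi>: "bij_betw \<psi> unit_disk unit_disk" and h: "bij_betw h unit_disk unit_disk"
    and factor: "\<And>z. z \<in> unit_disk \<Longrightarrow> f (\<psi> z) = h (z^2)"
  shows "\<exists>D1 D2. D1 \<subseteq> unit_disk \<and> D2 \<subseteq> unit_disk \<and> D1 \<union> D2 = unit_disk \<and> D1 \<inter> D2 = {\<psi> 0}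
           \<and> bij_betw f D1 unit_disk \<and> bij_betw f D2 unit_disk"
proof -
  have inj: "inj_on \<psi> unit_disk"
    using \<psi> by (simp add: bij_betw_def)
  have halves: "half_disk \<subseteq> unit_disk" "uminus ` half_disk \<subseteq> unit_disk"
    using half_disk_Un_uminus by auto
  have f_bij: "bij_betw f (\<psi> ` S) unit_disk"
    if S: "S \<subseteq> unit_disk" and sq: "bij_betw (\<lambda>z. z^2) S unit_disk" for S
  proof -
    have \<psi>_S: "bij_betw \<psi> S (\<psi> ` S)"
      using inj_on_subset[OF inj S] by (rule inj_on_imp_bij_betw)
    have "bij_betw (f \<circ> \<psi>) S unit_disk \<longleftrightarrow> bij_betw (h \<circ> (\<lambda>z. z^2)) S unit_disk"
      by (rule bij_betw_cong) (use S factor in auto)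
    then show ?thesis
      unfolding bij_betw_comp_iff[OF \<psi>_S] using bij_betw_trans[OF sq h] by simp
  qed
  have image: "\<psi> ` unit_disk = unit_disk"
    using \<psi> by (simp add: bij_betw_def)
  show ?thesis
  proof (intro exI conjI)
    show "\<psi> ` half_disk \<subseteq> unit_disk" "\<psi> ` uminus ` half_disk \<subseteq> unit_disk"
      using halves image by auto
    show "\<psi> ` half_disk \<union> \<psi> ` uminus ` half_disk = unit_disk"
      unfolding image_Un[symmetric] half_disk_Un_uminus image ..
    show "\<psi> ` half_disk \<inter> \<psi> ` uminus ` half_disk = {\<psi> 0}"
      using inj_on_image_Int[OF inj halves] half_disk_Int_uminus by simp
    show "bij_betw f (\<psi> ` half_disk) unit_disk"
      by (rule f_bij[OF halves(1) bij_betw_power2_half_disk])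
    show "bij_betw f (\<psi> ` uminus ` half_disk) unit_disk"
      by (rule f_bij[OF halves(2) bij_betw_power2_uminus_half_disk])
  qed
qed

lemma blaschke_product_critical_point:
  assumes u: "cmod u < 1" and w: "cmod w < 1" and c: "cmod c < 1"
    and crit: "blaschke_crit_poly u w c = 0"
  shows "hyp_geodesic_midpoint u w c \<and>
         (\<exists>D1 D2. D1 \<subseteq> unit_disk \<and> D2 \<subseteq> unit_disk \<and> D1 \<union> D2 = unit_disk \<and> D1 \<inter> D2 = {c} \<and>
            bij_betw (\<lambda>z. blaschke_factor w z * blaschke_factor u z) D1 unit_disk \<and>
            bij_betw (\<lambda>z. blaschke_factor w z * blaschke_factor u z) D2 unit_disk)"
proof
  define a where "a = blaschke_factor c u"
  have a: "cmod a < 1"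
    using norm_blaschke_factor_less_1 u c by (simp add: a_def)
  have antipodal: "blaschke_factor c w = - a"
    using blaschke_factor_zeros_antipodal[OF u w c crit] by (simp add: a_def)
  have centre: "blaschke_factor (-c) 0 = c"
    by (simp add: blaschke_factor_def)
  have zeros: "blaschke_factor (-c) a = u" "blaschke_factor (-c) (-a) = w"
    using blaschke_factor_inverse u w c unfolding a_def antipodal[unfolded a_def, symmetric]
    by simp_all
  show "hyp_geodesic_midpoint u w c"
    using hyp_geodesic_midpoint_blaschke_factor[OF _ _ _ hyp_geodesic_midpoint_antipodal[OF a], of "-c"]
      a c unfolding zeros centre by simp
  obtain l where l: "cmod l = 1"
    and normal_form: "\<And>z. cmod z < 1 \<Longrightarrow> blaschke_factor w (blaschke_factor (-c) z) * blaschke_factor u (blaschke_factor (-c) z)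
                                = l * blaschke_factor (a^2) (z^2)"
    using blaschke_product_antipodal_normal_form[OF u w c] antipodal unfolding a_def by blast
  have "cmod (a^2) < 1"
    using a by (simp add: norm_power power_less_one_iff)
  then have h: "bij_betw ((*) l \<circ> blaschke_factor (a^2)) unit_disk unit_disk"
    by (rule bij_betw_trans[OF bij_betw_blaschke_factor bij_betw_mult_unimodular[OF l]])
  have \<psi>: "bij_betw (blaschke_factor (-c)) unit_disk unit_disk"
    using bij_betw_blaschke_factor c by simp
  have factor: "(\<lambda>z. blaschke_factor w z * blaschke_factor u z) (blaschke_factor (-c) z)
              = ((*) l \<circ> blaschke_factor (a^2)) (z^2)" if "z \<in> unit_disk" for z
    using normal_form that by simp
  show "\<exists>D1 D2. D1 \<subseteq> unit_disk \<and> D2 \<subseteq> unit_disk \<and> D1 \<union> D2 = unit_disk \<and> D1 \<inter> D2 = {c} \<and>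
            bij_betw (\<lambda>z. blaschke_factor w z * blaschke_factor u z) D1 unit_disk \<and>
            bij_betw (\<lambda>z. blaschke_factor w z * blaschke_factor u z) D2 unit_disk"
    using disk_split_if_square_factorisation[OF \<psi> h factor] unfolding centre .
qed

theorem theorem3p1:
  fixes u w :: complex and B :: "complex \<Rightarrow> complex"
  assumes "u \<in> unit_disk" and "w \<in> unit_disk"
    and "B = (\<lambda>z. ((z - w) / (1 - cnj w * z)) * ((z - u) / (1 - cnj u * z)))"
  shows "(\<exists>!c. c \<in> unit_disk \<and> deriv B c = 0) \<and>
         (\<forall>c. c \<in> unit_disk \<and> deriv B c = 0 \<longrightarrow>
           hyp_geodesic_midpoint u w c \<and>
           (\<exists>D1 D2. D1 \<subseteq> unit_disk \<and> D2 \<subseteq> unit_disk \<and>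
              D1 \<union> D2 = unit_disk \<and> D1 \<inter> D2 = {c} \<and>
              bij_betw B D1 unit_disk \<and> bij_betw B D2 unit_disk))"
proof -
  have u: "cmod u < 1" and w: "cmod w < 1"
    using assms(1,2) by simp_all
  have B: "B = (\<lambda>z. blaschke_factor w z * blaschke_factor u z)"
    using assms(3) by (simp add: blaschke_factor_def)
  have critical: "deriv B c = 0 \<longleftrightarrow> blaschke_crit_poly u w c = 0" if "cmod c < 1" for c
    using blaschke_factor_denom_nonzero[OF w that] blaschke_factor_denom_nonzero[OF u that]
    unfolding B by (simp add: deriv_blaschke_product)
  then have critical_in_disk: "c \<in> unit_disk \<and> deriv B c = 0 \<longleftrightarrow> cmod c < 1 \<and> blaschke_crit_poly u w c = 0"
    for c by auto
  show ?thesis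
    unfolding critical_in_disk
    using blaschke_crit_poly_ex1_root_in_disk[OF u w] blaschke_product_critical_point[OF u w]
    unfolding B by blast
qed

end
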